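(* Let $\mathcal F=\{f_1,\dots,f_M\}$ be a frame for $\mathbb R^N$ with range of coefficients $W\subset\mathbb R^M$. Then $\mathbb M^{\mathcal F}$ is injective if and only if for every subset $S\subset\{1,\dots,M\}$: whenever $W\cap L^S\neq\{0\}$, one has $W\cap L^{S^\complement}=\{0\}$.
   Context: A frame for $\mathbb R^N$ is a spanning family $\{f_1,\dots,f_M\}$; $W=\{(\langle x,f_k\rangle)_{k=1}^M: x\in\mathbb R^N\}$. For $S\subset\{1,\dots,M\}$, $L^S=\{(a_1,\dots,a_M)\in\mathbb R^M: a_i=0 \text{ for all } i\in S\}$, and $S^\complement$ is the complement of $S$. $\mathbb M^{\mathcal F}:\mathbb R^N/\{\pm1\}\to\mathbb R^M$, $\hat x\mapsto(|\langle x,f_k\rangle|)_k$; injectivity means $|\langle x,f_k\rangle|=|\langle y,f_k\rangle|$ for all $k$ implies $y=\pm x$. *)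

theory Defs
  imports "HOL-Analysis.Analysis"
begin

text \<open>R^N is an abstract euclidean space 'a; R^M is modelled as functions
  nat \<Rightarrow> real supported on the index set {1..M}.\<close>

definition is_frame :: "(nat \<Rightarrow> 'a::euclidean_space) \<Rightarrow> nat \<Rightarrow> bool" where
  "is_frame f M \<longleftrightarrow> span (f ` {1..M}) = UNIV"

definition coeff_range :: "(nat \<Rightarrow> 'a::euclidean_space) \<Rightarrow> nat \<Rightarrow> (nat \<Rightarrow> real) set" where
  "coeff_range f M = {a. \<exists>x. a = (\<lambda>k. if k \<in> {1..M} then x \<bullet> f k else 0)}"

definition L_set :: "nat \<Rightarrow> nat set \<Rightarrow> (nat \<Rightarrow> real) set" where
  "L_set M S = {a. (\<forall>i. i \<notin> {1..M} \<longrightarrow> a i = 0) \<and> (\<forall>i\<in>S. a i = 0)}"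

definition phase_retrieval_injective :: "(nat \<Rightarrow> 'a::euclidean_space) \<Rightarrow> nat \<Rightarrow> bool" where
  "phase_retrieval_injective f M \<longleftrightarrow>
     (\<forall>x y. (\<forall>k\<in>{1..M}. \<bar>x \<bullet> f k\<bar> = \<bar>y \<bullet> f k\<bar>) \<longrightarrow> y = x \<or> y = - x)"

end

theory Submission
  imports Defs
begin

text \<open>The condition is the complement property of Balan, Casazza and Edidin: for every
  partition of the index set, the frame vectors of one of the two parts span. Indeed, for a
  frame \<open>W \<inter> L\<^sup>S = {0}\<close> says exactly that the vectors indexed by \<open>S\<close> span. If \<open>u \<noteq> 0\<close> is
  orthogonal to one part and \<open>v \<noteq> 0\<close> to the other, then \<open>u + v\<close> and \<open>u - v\<close> have coefficients
  of equal moduli without being equal up to sign. Conversely, if \<open>x\<close> and \<open>y\<close> have coefficients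
  of equal moduli, every frame vector is orthogonal to \<open>x + y\<close> or to \<open>x - y\<close>; one of these two
  index sets spans, so \<open>x + y = 0\<close> or \<open>x - y = 0\<close>.\<close>

lemma span_eq_UNIV_iff_orthogonal_imp_zero:
  fixes B :: "'a::euclidean_space set"
  shows "span B = UNIV \<longleftrightarrow> (\<forall>x. (\<forall>b\<in>B. x \<bullet> b = 0) \<longrightarrow> x = 0)"
proof
  assume "span B = UNIV"
  then show "\<forall>x. (\<forall>b\<in>B. x \<bullet> b = 0) \<longrightarrow> x = 0"
    by (metis UNIV_I orthogonal_def orthogonal_self orthogonal_to_span)
next
  assume "\<forall>x. (\<forall>b\<in>B. x \<bullet> b = 0) \<longrightarrow> x = 0"
  then show "span B = UNIV"
    by (meson span_base span_not_UNIV_orthogonal)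
qed

lemma abs_inner_eq_iff:
  fixes x y w :: "'a::real_inner"
  shows "\<bar>x \<bullet> w\<bar> = \<bar>y \<bullet> w\<bar> \<longleftrightarrow> (x + y) \<bullet> w = 0 \<or> (x - y) \<bullet> w = 0"
  by (auto simp: abs_eq_iff inner_add_left inner_diff_left)

lemma diff_eq_add_or_neg_add_imp_zero:
  fixes u v :: "'a::real_vector"
  assumes "u - v = u + v \<or> u - v = - (u + v)"
  shows "u = 0 \<or> v = 0"
proof -
  from assms have "(u + v) - (u - v) = 0 \<or> (u + v) + (u - v) = 0"
    by (metis diff_self add.right_inverse)
  moreover have "(u + v) - (u - v) = 2 *\<^sub>R v" "(u + v) + (u - v) = 2 *\<^sub>R u"
    by (simp_all add: scaleR_2 algebra_simps)
  ultimately show ?thesis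
    by (metis scaleR_eq_0_iff zero_neq_numeral)
qed

definition complement_property :: "(nat \<Rightarrow> 'a::euclidean_space) \<Rightarrow> nat \<Rightarrow> bool" where
  "complement_property f M \<longleftrightarrow>
     (\<forall>S \<subseteq> {1..M}. span (f ` S) = UNIV \<or> span (f ` ({1..M} - S)) = UNIV)"

lemma phase_retrieval_injective_imp_complement_property:
  assumes "phase_retrieval_injective f M"
  shows "complement_property f M"
  unfolding complement_property_def
proof (intro allI impI)
  fix S assume "S \<subseteq> {1..M}"
  show "span (f ` S) = UNIV \<or> span (f ` ({1..M} - S)) = UNIV"
  proof (rule ccontr)
    assume "\<not> ?thesis"
    then obtain u v where u: "u \<noteq> 0" "\<forall>i\<in>S. u \<bullet> f i = 0"
      and v: "v \<noteq> 0" "\<forall>i\<in>{1..M} - S. v \<bullet> f i = 0"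
      unfolding span_eq_UNIV_iff_orthogonal_imp_zero by auto
    have "\<forall>k\<in>{1..M}. u \<bullet> f k = 0 \<or> v \<bullet> f k = 0"
      using u(2) v(2) by blast
    then have "\<forall>k\<in>{1..M}. \<bar>(u + v) \<bullet> f k\<bar> = \<bar>(u - v) \<bullet> f k\<bar>"
      by (auto simp: inner_add_left inner_diff_left)
    then have "u - v = u + v \<or> u - v = - (u + v)"
      using assms unfolding phase_retrieval_injective_def by blast
    with u(1) v(1) show False
      using diff_eq_add_or_neg_add_imp_zero by blast
  qed
qed

lemma complement_property_imp_phase_retrieval_injective:
  assumes "complement_property f M"
  shows "phase_retrieval_injective f M"
  unfolding phase_retrieval_injective_def
proof (intro allI impI)
  fix x y
  assume "\<forall>k\<in>{1..M}. \<bar>x \<bullet> f k\<bar> = \<bar>y \<bullet> f k\<bar>"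
  then have moduli: "\<forall>k\<in>{1..M}. (x + y) \<bullet> f k = 0 \<or> (x - y) \<bullet> f k = 0"
    by (simp add: abs_inner_eq_iff)
  define S where "S = {k \<in> {1..M}. (x + y) \<bullet> f k = 0}"
  have "\<forall>k\<in>S. (x + y) \<bullet> f k = 0" and "\<forall>k\<in>{1..M} - S. (x - y) \<bullet> f k = 0"
    using moduli by (auto simp: S_def)
  moreover have "span (f ` S) = UNIV \<or> span (f ` ({1..M} - S)) = UNIV"
    using assms unfolding complement_property_def S_def by (simp add: subset_eq)
  ultimately have "x + y = 0 \<or> x - y = 0"
    unfolding span_eq_UNIV_iff_orthogonal_imp_zero by auto
  then show "y = x \<or> y = - x"
    by (auto simp: add_eq_0_iff2)
qed

theorem phase_retrieval_injective_iff_complement_property: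
  "phase_retrieval_injective f M \<longleftrightarrow> complement_property f M"
  using phase_retrieval_injective_imp_complement_property
    complement_property_imp_phase_retrieval_injective by blast

definition analysis_operator :: "(nat \<Rightarrow> 'a::real_inner) \<Rightarrow> nat \<Rightarrow> 'a \<Rightarrow> nat \<Rightarrow> real" where
  "analysis_operator f M x = (\<lambda>k. if k \<in> {1..M} then x \<bullet> f k else 0)"

lemma coeff_range_eq_range_analysis_operator:
  "coeff_range f M = range (analysis_operator f M)"
  by (auto simp: coeff_range_def analysis_operator_def)

lemma analysis_operator_in_L_set_iff:
  "analysis_operator f M x \<in> L_set M S \<longleftrightarrow> (\<forall>i\<in>S \<inter> {1..M}. x \<bullet> f i = 0)"
  by (auto simp: L_set_def analysis_operator_def)

lemma analysis_operator_eq_0_iff: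
  assumes "is_frame f M"
  shows "analysis_operator f M x = (\<lambda>_. 0) \<longleftrightarrow> x = 0"
proof -
  have "analysis_operator f M x = (\<lambda>_. 0) \<longleftrightarrow> (\<forall>b\<in>f ` {1..M}. x \<bullet> b = 0)"
    by (auto simp: analysis_operator_def fun_eq_iff)
  also have "\<dots> \<longleftrightarrow> x = 0"
    using assms unfolding is_frame_def span_eq_UNIV_iff_orthogonal_imp_zero by auto
  finally show ?thesis .
qed

lemma coeff_range_Int_L_set_eq_zero_iff:
  assumes "is_frame f M"
  shows "coeff_range f M \<inter> L_set M S = {\<lambda>_. 0} \<longleftrightarrow> span (f ` (S \<inter> {1..M})) = UNIV"
proof -
  define K where "K = {x. \<forall>i\<in>S \<inter> {1..M}. x \<bullet> f i = 0}"
  let ?T = "analysis_operator f M"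
  have "0 \<in> K"
    by (simp add: K_def)
  have "coeff_range f M \<inter> L_set M S = ?T ` {x. ?T x \<in> L_set M S}"
    unfolding coeff_range_eq_range_analysis_operator by auto
  also have "\<dots> = ?T ` K"
    by (simp add: analysis_operator_in_L_set_iff K_def)
  finally have "coeff_range f M \<inter> L_set M S = {\<lambda>_. 0} \<longleftrightarrow> ?T ` K \<subseteq> {\<lambda>_. 0}"
    using \<open>0 \<in> K\<close> by (auto simp: subset_singleton_iff)
  also have "\<dots> \<longleftrightarrow> (\<forall>x\<in>K. x = 0)"
    using analysis_operator_eq_0_iff[OF assms] by (simp add: image_subset_iff)
  finally show ?thesis
    unfolding span_eq_UNIV_iff_orthogonal_imp_zero K_def by auto
qed

theorem corollary2p4:
  fixes f :: "nat \<Rightarrow> 'a::euclidean_space" and M :: nat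
  assumes "is_frame f M"
  shows "phase_retrieval_injective f M \<longleftrightarrow>
    (\<forall>S. S \<subseteq> {1..M} \<longrightarrow>
       coeff_range f M \<inter> L_set M S \<noteq> {\<lambda>_. 0} \<longrightarrow>
       coeff_range f M \<inter> L_set M ({1..M} - S) = {\<lambda>_. 0})"
proof -
  have "(coeff_range f M \<inter> L_set M S \<noteq> {\<lambda>_. 0} \<longrightarrow>
      coeff_range f M \<inter> L_set M ({1..M} - S) = {\<lambda>_. 0}) \<longleftrightarrow>
      span (f ` S) = UNIV \<or> span (f ` ({1..M} - S)) = UNIV" if "S \<subseteq> {1..M}" for S
    using that by (simp add: coeff_range_Int_L_set_eq_zero_iff[OF assms] Int_absorb2; blast)
  then show ?thesis
    by (auto simp: phase_retrieval_injective_iff_complement_property complement_property_def)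
qed

end
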